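(* Let $S$ be a group and $L, L'$ subgroups of $S$, and let $k$ be a positive integer. Write $A^{\times k}$ for the direct product of $k$ copies of a group $A$, so that $L^{\times k}$ and $L'^{\times k}$ are subgroups of $S^{\times k}$. (1) If $(S,L,L')$ is a Gassman-Sunada triple with property FF, then $(S^{\times k},L^{\times k},L'^{\times k})$ is a Gassman-Sunada triple with property FF. (2) If $(S,L,L')$ is an EC-triple with property FF, then $(S^{\times k},L^{\times k},L'^{\times k})$ is an EC-triple with property FF.
   Context: A triple $(G,H,H')$ with $H,H'\le G$ is a Gassman-Sunada triple (almost conjugate, AC) if there is a bijection $B:H\to H'$ such that $B(h)$ is conjugate to $h$ in $G$ for every $h\in H$ (equivalently, $|g^G\cap H|=|g^G\cap H'|$ for all $g\in G$). It is an EC-triple ($H,H'$ elementwise conjugate) if every element of $H$ is conjugate in $G$ to some element of $H'$ and every element of $H'$ is conjugate in $G$ to some element of $H$. The triple has property FF if no nontrivial normal subgroup of $G$ is contained in $H$, and no nontrivial normal subgroup of $G$ is contained in $H'$ (i.e. the left-translation actions of $G$ on $G/H$ and on $G/H'$ are faithful). *)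

theory Defs
  imports "HOL-Algebra.Product_Groups"
begin

definition conjugate_in :: "('a, 'b) monoid_scheme \<Rightarrow> 'a \<Rightarrow> 'a \<Rightarrow> bool" where
  "conjugate_in G x y \<longleftrightarrow> (\<exists>g \<in> carrier G. y = g \<otimes>\<^bsub>G\<^esub> x \<otimes>\<^bsub>G\<^esub> inv\<^bsub>G\<^esub> g)"

definition gassman_sunada :: "('a, 'b) monoid_scheme \<Rightarrow> 'a set \<Rightarrow> 'a set \<Rightarrow> bool" where
  "gassman_sunada G H H' \<longleftrightarrow> subgroup H G \<and> subgroup H' G \<and>
     (\<exists>B. bij_betw B H H' \<and> (\<forall>h \<in> H. conjugate_in G h (B h)))"

definition ec_triple :: "('a, 'b) monoid_scheme \<Rightarrow> 'a set \<Rightarrow> 'a set \<Rightarrow> bool" where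
  "ec_triple G H H' \<longleftrightarrow> subgroup H G \<and> subgroup H' G \<and>
     (\<forall>h \<in> H. \<exists>h' \<in> H'. conjugate_in G h h') \<and>
     (\<forall>h' \<in> H'. \<exists>h \<in> H. conjugate_in G h' h)"

definition property_FF :: "('a, 'b) monoid_scheme \<Rightarrow> 'a set \<Rightarrow> 'a set \<Rightarrow> bool" where
  "property_FF G H H' \<longleftrightarrow>
     (\<forall>N. N \<lhd> G \<and> N \<subseteq> H \<longrightarrow> N = {\<one>\<^bsub>G\<^esub>}) \<and>
     (\<forall>N. N \<lhd> G \<and> N \<subseteq> H' \<longrightarrow> N = {\<one>\<^bsub>G\<^esub>})"

definition pow_group :: "('a, 'b) monoid_scheme \<Rightarrow> nat \<Rightarrow> (nat \<Rightarrow> 'a) monoid" where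
  "pow_group G k = product_group {..<k} (\<lambda>_. G)"

definition pow_set :: "'a set \<Rightarrow> nat \<Rightarrow> (nat \<Rightarrow> 'a) set" where
  "pow_set H k = (\<Pi>\<^sub>E i\<in>{..<k}. H)"

end

theory Submission
  imports Defs
begin

text \<open>
  Conjugacy in a direct product is componentwise conjugacy, so conjugacy-preserving bijections
  and elementwise matchings between the factors assemble into ones between the products; this
  works for any index set and any family of factors. For FF: projecting onto a factor is a
  surjective homomorphism, so it maps a normal subgroup N of the product to a normal subgroup
  of the factor. If N lies in a product of core-free subgroups, every projection of N is
  trivial, hence so is N.
\<close>

definition core_free :: "('a, 'b) monoid_scheme \<Rightarrow> 'a set \<Rightarrow> bool" where
  "core_free G H \<longleftrightarrow> (\<forall>N. N \<lhd> G \<and> N \<subseteq> H \<longrightarrow> N = {\<one>\<^bsub>G\<^esub>})"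

lemma property_FF_iff_core_free: "property_FF G H H' \<longleftrightarrow> core_free G H \<and> core_free G H'"
  unfolding property_FF_def core_free_def ..

lemma bij_betw_PiE_map:
  assumes "\<And>i. i \<in> I \<Longrightarrow> bij_betw (f i) (A i) (B i)"
  shows "bij_betw (\<lambda>x. \<lambda>i\<in>I. f i (x i)) (\<Pi>\<^sub>E i\<in>I. A i) (\<Pi>\<^sub>E i\<in>I. B i)"
proof (rule bij_betw_byWitness[where f' = "\<lambda>y. \<lambda>i\<in>I. inv_into (A i) (f i) (y i)"])
  show "\<forall>x\<in>\<Pi>\<^sub>E i\<in>I. A i. (\<lambda>i\<in>I. inv_into (A i) (f i) ((\<lambda>i\<in>I. f i (x i)) i)) = x"
  proof
    fix x assume x: "x \<in> (\<Pi>\<^sub>E i\<in>I. A i)"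
    show "(\<lambda>i\<in>I. inv_into (A i) (f i) ((\<lambda>i\<in>I. f i (x i)) i)) = x"
      using assms x by (auto simp: PiE_iff extensional_def fun_eq_iff intro!: bij_betw_inv_into_left)
  qed
  show "\<forall>y\<in>\<Pi>\<^sub>E i\<in>I. B i. (\<lambda>i\<in>I. f i ((\<lambda>i\<in>I. inv_into (A i) (f i) (y i)) i)) = y"
  proof
    fix y assume y: "y \<in> (\<Pi>\<^sub>E i\<in>I. B i)"
    show "(\<lambda>i\<in>I. f i ((\<lambda>i\<in>I. inv_into (A i) (f i) (y i)) i)) = y"
      using assms y by (auto simp: PiE_iff extensional_def fun_eq_iff intro!: bij_betw_inv_into_right)
  qed
  show "(\<lambda>x. \<lambda>i\<in>I. f i (x i)) ` (\<Pi>\<^sub>E i\<in>I. A i) \<subseteq> (\<Pi>\<^sub>E i\<in>I. B i)"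
    using assms by (auto simp: PiE_iff) (metis bij_betw_apply)
  show "(\<lambda>y. \<lambda>i\<in>I. inv_into (A i) (f i) (y i)) ` (\<Pi>\<^sub>E i\<in>I. B i) \<subseteq> (\<Pi>\<^sub>E i\<in>I. A i)"
    using assms by (auto simp: PiE_iff) (metis bij_betw_apply bij_betw_inv_into)
qed

lemma conjugate_in_product_group:
  assumes groups: "\<And>i. i \<in> I \<Longrightarrow> group (G i)"
    and x: "x \<in> carrier (product_group I G)" and y: "y \<in> carrier (product_group I G)"
    and conj: "\<And>i. i \<in> I \<Longrightarrow> conjugate_in (G i) (x i) (y i)"
  shows "conjugate_in (product_group I G) x y"
proof -
  obtain g where g: "\<And>i. i \<in> I \<Longrightarrow> g i \<in> carrier (G i) \<and> y i = g i \<otimes>\<^bsub>G i\<^esub> x i \<otimes>\<^bsub>G i\<^esub> inv\<^bsub>G i\<^esub> g i"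
    using conj unfolding conjugate_in_def by metis
  define g' where "g' = (\<lambda>i\<in>I. g i)"
  have g': "g' \<in> carrier (product_group I G)"
    using g by (simp add: g'_def)
  have "g' \<otimes>\<^bsub>product_group I G\<^esub> x \<otimes>\<^bsub>product_group I G\<^esub> inv\<^bsub>product_group I G\<^esub> g' = y"
    using g g' x y groups by (auto simp: g'_def PiE_iff extensional_def fun_eq_iff)
  with g' show ?thesis
    unfolding conjugate_in_def by blast
qed

lemma gassman_sunada_product_group:
  assumes groups: "\<And>i. i \<in> I \<Longrightarrow> group (G i)"
    and gs: "\<And>i. i \<in> I \<Longrightarrow> gassman_sunada (G i) (H i) (H' i)"
  shows "gassman_sunada (product_group I G) (\<Pi>\<^sub>E i\<in>I. H i) (\<Pi>\<^sub>E i\<in>I. H' i)"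
proof -
  have subgroups: "subgroup (H i) (G i)" "subgroup (H' i) (G i)" if "i \<in> I" for i
    using gs[OF that] unfolding gassman_sunada_def by auto
  obtain B where B: "\<And>i. i \<in> I \<Longrightarrow> bij_betw (B i) (H i) (H' i) \<and> (\<forall>h \<in> H i. conjugate_in (G i) h (B i h))"
    using gs unfolding gassman_sunada_def by metis
  let ?B = "\<lambda>x. \<lambda>i\<in>I. B i (x i)"
  have bij: "bij_betw ?B (\<Pi>\<^sub>E i\<in>I. H i) (\<Pi>\<^sub>E i\<in>I. H' i)"
    using B by (intro bij_betw_PiE_map) blast
  have "conjugate_in (product_group I G) h (?B h)" if h: "h \<in> (\<Pi>\<^sub>E i\<in>I. H i)" for h
  proof (rule conjugate_in_product_group[OF groups])
    show "h \<in> carrier (product_group I G)"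
      using h subgroups(1) by (auto simp: PiE_iff dest: subgroup.subset)
    show "?B h \<in> carrier (product_group I G)"
      using bij_betw_apply[OF bij h] subgroups(2) by (auto simp: PiE_iff dest: subgroup.subset)
    show "conjugate_in (G i) (h i) (?B h i)" if "i \<in> I" for i
      using B h that by (auto simp: PiE_iff)
  qed
  with bij subgroups groups show ?thesis
    unfolding gassman_sunada_def by (auto simp: PiE_subgroup_product_group)
qed

lemma elementwise_conjugate_product_group:
  assumes groups: "\<And>i. i \<in> I \<Longrightarrow> group (G i)"
    and sub: "\<And>i. i \<in> I \<Longrightarrow> H i \<subseteq> carrier (G i)" "\<And>i. i \<in> I \<Longrightarrow> H' i \<subseteq> carrier (G i)"
    and match: "\<And>i. i \<in> I \<Longrightarrow> \<forall>h \<in> H i. \<exists>h' \<in> H' i. conjugate_in (G i) h h'"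
  shows "\<forall>h \<in> \<Pi>\<^sub>E i\<in>I. H i. \<exists>h' \<in> \<Pi>\<^sub>E i\<in>I. H' i. conjugate_in (product_group I G) h h'"
proof
  fix h assume h: "h \<in> (\<Pi>\<^sub>E i\<in>I. H i)"
  have "\<forall>i\<in>I. \<exists>h' \<in> H' i. conjugate_in (G i) (h i) h'"
    using match h by (simp add: PiE_iff)
  then obtain f where f: "\<And>i. i \<in> I \<Longrightarrow> f i \<in> H' i \<and> conjugate_in (G i) (h i) (f i)"
    by metis
  have f': "(\<lambda>i\<in>I. f i) \<in> (\<Pi>\<^sub>E i\<in>I. H' i)"
    using f by simp
  have "conjugate_in (product_group I G) h (\<lambda>i\<in>I. f i)"
  proof (rule conjugate_in_product_group[OF groups])
    show "h \<in> carrier (product_group I G)"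
      using h sub(1) by (force simp: PiE_iff)
    show "(\<lambda>i\<in>I. f i) \<in> carrier (product_group I G)"
      using f' sub(2) by (force simp: PiE_iff)
    show "conjugate_in (G i) (h i) ((\<lambda>i\<in>I. f i) i)" if "i \<in> I" for i
      using f[OF that] that by simp
  qed
  with f' show "\<exists>h' \<in> \<Pi>\<^sub>E i\<in>I. H' i. conjugate_in (product_group I G) h h'" by blast
qed

lemma ec_triple_product_group:
  assumes groups: "\<And>i. i \<in> I \<Longrightarrow> group (G i)"
    and ec: "\<And>i. i \<in> I \<Longrightarrow> ec_triple (G i) (H i) (H' i)"
  shows "ec_triple (product_group I G) (\<Pi>\<^sub>E i\<in>I. H i) (\<Pi>\<^sub>E i\<in>I. H' i)"
proof -
  have subgroups: "subgroup (H i) (G i)" "subgroup (H' i) (G i)" if "i \<in> I" for i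
    using ec[OF that] unfolding ec_triple_def by auto
  have subsets: "H i \<subseteq> carrier (G i)" "H' i \<subseteq> carrier (G i)" if "i \<in> I" for i
    using subgroups[OF that] by (auto dest: subgroup.subset)
  have matches: "\<forall>h \<in> H i. \<exists>h' \<in> H' i. conjugate_in (G i) h h'"
    "\<forall>h' \<in> H' i. \<exists>h \<in> H i. conjugate_in (G i) h' h" if "i \<in> I" for i
    using ec[OF that] unfolding ec_triple_def by auto
  have "\<forall>h \<in> \<Pi>\<^sub>E i\<in>I. H i. \<exists>h' \<in> \<Pi>\<^sub>E i\<in>I. H' i. conjugate_in (product_group I G) h h'"
    by (rule elementwise_conjugate_product_group[OF groups subsets(1) subsets(2) matches(1)])
  moreover have "\<forall>h' \<in> \<Pi>\<^sub>E i\<in>I. H' i. \<exists>h \<in> \<Pi>\<^sub>E i\<in>I. H i. conjugate_in (product_group I G) h' h"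
    by (rule elementwise_conjugate_product_group[OF groups subsets(2) subsets(1) matches(2)])
  moreover have "subgroup (\<Pi>\<^sub>E i\<in>I. H i) (product_group I G)" "subgroup (\<Pi>\<^sub>E i\<in>I. H' i) (product_group I G)"
    using subgroups groups by (simp_all add: PiE_subgroup_product_group)
  ultimately show ?thesis
    unfolding ec_triple_def by blast
qed

lemma normal_image_proj_product_group:
  assumes groups: "\<And>i. i \<in> I \<Longrightarrow> group (G i)"
    and N: "N \<lhd> product_group I G" and i: "i \<in> I"
  shows "(\<lambda>x. x i) ` N \<lhd> G i"
proof -
  interpret normal N "product_group I G" by (rule N)
  have "group_hom (product_group I G) (G i) (\<lambda>x. x i)"
    using groups i by (auto simp: group_hom_def group_hom_axioms_def intro!: homI)
  moreover have "(\<lambda>x. x i) ` carrier (product_group I G) = carrier (G i)"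
  proof (intro equalityI subsetI)
    fix s assume s: "s \<in> carrier (G i)"
    have "(\<lambda>j\<in>I. if j = i then s else \<one>\<^bsub>G j\<^esub>) \<in> carrier (product_group I G)"
      using s groups by (auto simp: group.is_monoid)
    then show "s \<in> (\<lambda>x. x i) ` carrier (product_group I G)"
      by (rule rev_image_eqI) (use i in simp)
  qed (use i in auto)
  ultimately show ?thesis
    by (rule surj_hom_normal_subgroup)
qed

lemma core_free_product_group:
  assumes groups: "\<And>i. i \<in> I \<Longrightarrow> group (G i)"
    and core_free: "\<And>i. i \<in> I \<Longrightarrow> core_free (G i) (H i)"
  shows "core_free (product_group I G) (\<Pi>\<^sub>E i\<in>I. H i)"
  unfolding core_free_def
proof (intro allI impI)
  fix N assume N: "N \<lhd> product_group I G \<and> N \<subseteq> (\<Pi>\<^sub>E i\<in>I. H i)"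
  have trivial_proj: "(\<lambda>x. x i) ` N = {\<one>\<^bsub>G i\<^esub>}" if i: "i \<in> I" for i
  proof -
    have "(\<lambda>x. x i) ` N \<lhd> G i"
      using N groups i by (blast intro: normal_image_proj_product_group)
    moreover have "(\<lambda>x. x i) ` N \<subseteq> H i"
      using N i by (auto simp: PiE_iff)
    ultimately show ?thesis
      using core_free[OF i] unfolding core_free_def by blast
  qed
  have "N \<subseteq> {\<one>\<^bsub>product_group I G\<^esub>}"
    using N trivial_proj by (fastforce simp: PiE_iff intro: restrict_ext)
  moreover have "\<one>\<^bsub>product_group I G\<^esub> \<in> N"
    using N normal_imp_subgroup subgroup.one_closed by blast
  ultimately show "N = {\<one>\<^bsub>product_group I G\<^esub>}" by blast
qed

lemma property_FF_product_group:
  assumes "\<And>i. i \<in> I \<Longrightarrow> group (G i)" and "\<And>i. i \<in> I \<Longrightarrow> property_FF (G i) (H i) (H' i)"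
  shows "property_FF (product_group I G) (\<Pi>\<^sub>E i\<in>I. H i) (\<Pi>\<^sub>E i\<in>I. H' i)"
  using assms by (simp add: property_FF_iff_core_free core_free_product_group)

theorem mainTheorem1:
  fixes S :: "('a, 'b) monoid_scheme" and L L' :: "'a set" and k :: nat
  assumes "group S" and "subgroup L S" and "subgroup L' S" and "0 < k"
  shows "(gassman_sunada S L L' \<and> property_FF S L L' \<longrightarrow>
            gassman_sunada (pow_group S k) (pow_set L k) (pow_set L' k) \<and>
            property_FF (pow_group S k) (pow_set L k) (pow_set L' k))
       \<and> (ec_triple S L L' \<and> property_FF S L L' \<longrightarrow>
            ec_triple (pow_group S k) (pow_set L k) (pow_set L' k) \<and>
            property_FF (pow_group S k) (pow_set L k) (pow_set L' k))"
  unfolding pow_group_def pow_set_def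
  using assms(1)
  by (simp add: gassman_sunada_product_group ec_triple_product_group property_FF_product_group)

end
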